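(* Let the standing assumptions (listed in the context) hold and let $(x_k)$ be generated by Algorithm SLBFGS. Then there are constants $c,C>0$ such that $c\cdot\min\{1,\|\nabla\mathcal{J}(x_k)\|^{c_2}\}\le\frac{\|d_k\|}{\|\nabla\mathcal{J}(x_k)\|}\le C\cdot\max\{1,\|\nabla\mathcal{J}(x_k)\|^{-c_2}\}$ as well as $\frac{|\nabla\mathcal{J}(x_k)^Td_k|}{\|d_k\|}\ge C^{-1}\|\nabla\mathcal{J}(x_k)\|\min\{1,\|\nabla\mathcal{J}(x_k)\|^{2c_2}\}$ for all $k\ge0$.
   Context: Let $\mathcal{X}$ be a Hilbert space and $\mathcal{J}:\mathcal{X}\to\mathbb{R}$. Algorithm SLBFGS (structured inverse L-BFGS): inputs $x_0\in\mathcal{X}$, $\epsilon\geq0$, $\ell\in\mathbb{N}_0$, $c_0\geq 0$, $C_0\in[c_0,\infty]$, $c_s,c_1,c_2>0$; let $\tau_0>0$. For $k=0,1,2,\ldots$: let $m=\max\{0,k-\ell\}$; choose a symmetric positive semi-definite bounded linear operator $S_k$; set $B_k^{(0)}=\tau_k I+S_k$; let $B_k$ be obtained from $B_k^{(0)}$ and the currently stored pairs $(s_j,y_j)$, $m\le j\le k-1$, by successive L-BFGS updates $B\mapsto B+\frac{yy^T}{y^Ts}-\frac{Bss^TB}{s^TBs}$; set $d_k=-B_k^{-1}\nabla\mathcal{J}(x_k)$; compute a step length $\alpha_k>0$ by a line search; set $s_k=\alpha_kd_k$, $x_{k+1}=x_k+s_k$, $y_k=\nabla\mathcal{J}(x_{k+1})-\nabla\mathcal{J}(x_k)$;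 store $(s_k,y_k)$ only if $y_k^Ts_k>c_s\|s_k\|^2$; if $k\ge\ell$ remove $(s_m,y_m)$ from storage; stop with output $x_{k+1}$ if $\|\nabla\mathcal{J}(x_{k+1})\|\le\epsilon$; set $z_k=y_k-S_{k+1}s_k$, $\omega^l_{k+1}=\min\{c_0,c_1\|\nabla\mathcal{J}(x_{k+1})\|^{c_2}\}$, $\omega^u_{k+1}=\max\{C_0,(c_1\|\nabla\mathcal{J}(x_{k+1})\|^{c_2})^{-1}\}$; with $P(t)=\min\{\max\{t,\omega^l_{k+1}\},\omega^u_{k+1}\}$ and $\rho=z_k^Ts_k$ let $\tau^s=P(\rho/\|s_k\|^2)$, $\tau^g=P(\|z_k\|/\|s_k\|)$, $\tau^z=P(\|z_k\|^2/\rho)$; if $\rho>0$ choose $\tau_{k+1}\in[\tau^s,\tau^z]$, else choose $\tau_{k+1}\in[\tau^s,\tau^g]$. Line searches: Armijo with backtracking means, for fixed $\beta,\sigma\in(0,1)$, $\alpha_k$ is the largest number in $\{1,\beta,\beta^2,\ldots\}$ with $\mathcal{J}(x_{k+1})\le\mathcal{J}(x_k)+\alpha_k\sigma\nabla\mathcal{J}(x_k)^Td_k$; the Wolfe–Powell conditions are this Armijo inequality together with $\nabla\mathcal{J}(x_{k+1})^Td_k\ge\eta\nabla\mathcal{J}(x_k)^Td_k$ for fixed $\eta\in(\sigma,1)$. Let $\Omega=\{x:\mathcal{J}(x)\le\mathcal{J}(x_0)\}$ and $\Omega_\delta=\{x:\exists\hat x\in\Omega,\ \|x-\hat x\|<\delta\}$.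 Standing assumptions: 1) $\mathcal{J}$ is continuously differentiable and bounded below; 2) $\nabla\mathcal{J}$ is Lipschitz continuous on $\Omega$ with constant $L>0$; 3) $(\|S_k\|)$ is bounded; 4) the step sizes consistently satisfy the Armijo condition computed by backtracking, or consistently satisfy the Wolfe–Powell conditions; in the Armijo case there is $\delta>0$ such that $\mathcal{J}$ or $\nabla\mathcal{J}$ is uniformly continuous on $\Omega_\delta$; 5) $c_0=0$ is only chosen if then $\sup_k\|(B_k^{(0)})^{-1}\|<\infty$; 6) $C_0=\infty$ is only chosen if either the interval $[\tau^s,\tau^z]$ is replaced by $[\tau^s,\tau^g]$, or $\mathcal{J}$ is twice continuously differentiable, $\overline{G_k}:=\int_0^1\nabla^2\mathcal{J}(x_k+ts_k)\,dt-S_{k+1}$ is symmetric positive semi-definite for all $k$ and $(\|\overline{G_k}\|)$ is bounded. *)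

theory Defs
  imports "HOL-Analysis.Analysis"
begin

definition lbfgs_update :: "('a::real_inner \<Rightarrow> 'a) \<Rightarrow> 'a \<Rightarrow> 'a \<Rightarrow> ('a \<Rightarrow> 'a)" where
  "lbfgs_update B s y =
     (\<lambda>v. B v + ((y \<bullet> v) / (y \<bullet> s)) *\<^sub>R y - ((s \<bullet> B v) / (s \<bullet> B s)) *\<^sub>R B s)"

definition stored_pairs :: "real \<Rightarrow> nat \<Rightarrow> (nat \<Rightarrow> 'a::real_inner) \<Rightarrow> (nat \<Rightarrow> 'a) \<Rightarrow> nat \<Rightarrow> nat list" where
  "stored_pairs cs ell s y k = filter (\<lambda>j. cs * (norm (s j))\<^sup>2 < y j \<bullet> s j) [k - ell ..< k]"

definition slbfgs_B0 :: "(nat \<Rightarrow> real) \<Rightarrow> (nat \<Rightarrow> 'a::real_normed_vector \<Rightarrow>\<^sub>L 'a) \<Rightarrow> nat \<Rightarrow> 'a \<Rightarrow> 'a" where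
  "slbfgs_B0 tau S k = (\<lambda>v. tau k *\<^sub>R v + blinfun_apply (S k) v)"

definition step_s :: "(nat \<Rightarrow> 'a::real_vector) \<Rightarrow> nat \<Rightarrow> 'a" where
  "step_s x j = x (Suc j) - x j"

definition step_y :: "('a \<Rightarrow> 'a::real_vector) \<Rightarrow> (nat \<Rightarrow> 'a) \<Rightarrow> nat \<Rightarrow> 'a" where
  "step_y g x j = g (x (Suc j)) - g (x j)"

definition slbfgs_B :: "real \<Rightarrow> nat \<Rightarrow> ('a::real_inner \<Rightarrow> 'a) \<Rightarrow> (nat \<Rightarrow> 'a) \<Rightarrow> (nat \<Rightarrow> real)
    \<Rightarrow> (nat \<Rightarrow> 'a \<Rightarrow>\<^sub>L 'a) \<Rightarrow> nat \<Rightarrow> 'a \<Rightarrow> 'a" where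
  "slbfgs_B cs ell g x tau S k =
     foldl (\<lambda>B j. lbfgs_update B (step_s x j) (step_y g x j)) (slbfgs_B0 tau S k)
           (stored_pairs cs ell (step_s x) (step_y g x) k)"

definition omega_l :: "real \<Rightarrow> real \<Rightarrow> real \<Rightarrow> real \<Rightarrow> real" where
  "omega_l c0 c1 c2 gn = min c0 (c1 * gn powr c2)"

definition omega_u :: "ereal \<Rightarrow> real \<Rightarrow> real \<Rightarrow> real \<Rightarrow> ereal" where
  "omega_u C0 c1 c2 gn = max C0 (ereal (inverse (c1 * gn powr c2)))"

definition projP :: "real \<Rightarrow> ereal \<Rightarrow> real \<Rightarrow> real \<Rightarrow> real \<Rightarrow> real \<Rightarrow> real" where
  "projP c0 C0 c1 c2 gn t =
     real_of_ereal (min (ereal (max t (omega_l c0 c1 c2 gn))) (omega_u C0 c1 c2 gn))"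

definition tau_s :: "real \<Rightarrow> ereal \<Rightarrow> real \<Rightarrow> real \<Rightarrow> real \<Rightarrow> 'a::real_inner \<Rightarrow> 'a \<Rightarrow> real" where
  "tau_s c0 C0 c1 c2 gn s z = projP c0 C0 c1 c2 gn ((z \<bullet> s) / (norm s)\<^sup>2)"

definition tau_g :: "real \<Rightarrow> ereal \<Rightarrow> real \<Rightarrow> real \<Rightarrow> real \<Rightarrow> 'a::real_inner \<Rightarrow> 'a \<Rightarrow> real" where
  "tau_g c0 C0 c1 c2 gn s z = projP c0 C0 c1 c2 gn (norm z / norm s)"

definition tau_z :: "real \<Rightarrow> ereal \<Rightarrow> real \<Rightarrow> real \<Rightarrow> real \<Rightarrow> 'a::real_inner \<Rightarrow> 'a \<Rightarrow> real" where
  "tau_z c0 C0 c1 c2 gn s z = projP c0 C0 c1 c2 gn ((norm z)\<^sup>2 / (z \<bullet> s))"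

definition tau_admissible :: "real \<Rightarrow> ereal \<Rightarrow> real \<Rightarrow> real \<Rightarrow> real \<Rightarrow> 'a::real_inner \<Rightarrow> 'a \<Rightarrow> real \<Rightarrow> bool" where
  "tau_admissible c0 C0 c1 c2 gn s z t \<longleftrightarrow>
     tau_s c0 C0 c1 c2 gn s z \<le> t \<and>
     t \<le> (if z \<bullet> s > 0 then tau_z c0 C0 c1 c2 gn s z else tau_g c0 C0 c1 c2 gn s z)"

definition armijo :: "('a::real_inner \<Rightarrow> real) \<Rightarrow> ('a \<Rightarrow> 'a) \<Rightarrow> real \<Rightarrow> 'a \<Rightarrow> 'a \<Rightarrow> real \<Rightarrow> bool" where
  "armijo J g \<sigma> x d a \<longleftrightarrow> J (x + a *\<^sub>R d) \<le> J x + a * \<sigma> * (g x \<bullet> d)"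

definition sym_psd :: "('a::real_inner \<Rightarrow>\<^sub>L 'a) \<Rightarrow> bool" where
  "sym_psd A \<longleftrightarrow> (\<forall>u v. blinfun_apply A u \<bullet> v = u \<bullet> blinfun_apply A v) \<and>
                  (\<forall>u. 0 \<le> blinfun_apply A u \<bullet> u)"

end

(*
  The direction solves B_k d_k = -g_k, so the three estimates follow once B_k is symmetric with
  c min(1, |g_k|^c2) |u|^2 <= u^T B_k u and |B_k u| <= C max(1, |g_k|^-c2) |u| along the run.

  For the seed tau_k I + S_k both bounds come from the safeguard: from below tau_k >= omega^l >=
  min(c0, c1) min(1, |g_k|^c2), or the bounded inverse of Assumption 5 when c0 = 0; from above
  omega^u when C0 is finite, and otherwise tau^g <= L + |S_{k+1}| by Lipschitz continuity of the
  gradient, resp. tau^z <= |G_k| because G_k s_k = z_k by the integral mean value theorem.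
  Each of the at most ell L-BFGS updates with a stored pair (y^T s > c_s |s|^2, |y| <= L |s|)
  shrinks the lower bound by a fixed factor and at most doubles the upper bound.  Lipschitz
  continuity may be used because the Armijo condition keeps all iterates in the level set.
*)
theory Submission
  imports Defs
begin

section \<open>Positive definite operators and the L-BFGS update\<close>

definition spd_bounds :: "('a::real_inner \<Rightarrow> 'a) \<Rightarrow> real \<Rightarrow> real \<Rightarrow> bool" where
  "spd_bounds B \<mu> \<Lambda> \<longleftrightarrow> linear B \<and> (\<forall>u v. B u \<bullet> v = u \<bullet> B v) \<and>
     (\<forall>u. \<mu> * (norm u)\<^sup>2 \<le> u \<bullet> B u) \<and> (\<forall>u. norm (B u) \<le> \<Lambda> * norm u) \<and> 0 < \<mu> \<and> 0 \<le> \<Lambda>"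

lemma spd_bounds_mono:
  assumes "spd_bounds B \<mu> \<Lambda>" "0 < \<mu>'" "\<mu>' \<le> \<mu>" "\<Lambda> \<le> \<Lambda>'"
  shows "spd_bounds B \<mu>' \<Lambda>'"
proof -
  have "\<mu>' * (norm u)\<^sup>2 \<le> \<mu> * (norm u)\<^sup>2" "\<Lambda> * norm u \<le> \<Lambda>' * norm u" for u :: 'a
    using assms(3,4) by (simp_all add: mult_right_mono)
  then show ?thesis
    using assms(1,2,4) unfolding spd_bounds_def by (meson order_trans)
qed

lemma spd_bounds_psd: "spd_bounds B \<mu> \<Lambda> \<Longrightarrow> 0 \<le> u \<bullet> B u"
  unfolding spd_bounds_def by (meson order_trans mult_nonneg_nonneg zero_le_power2 less_imp_le)

lemma inner_le_bound_norm_sq: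
  assumes "norm (B u) \<le> \<Lambda> * norm u"
  shows "u \<bullet> B u \<le> \<Lambda> * (norm u)\<^sup>2"
proof -
  have "u \<bullet> B u \<le> norm u * norm (B u)" by (rule Cauchy_Schwarz_ineq2[THEN abs_le_D1])
  also have "\<dots> \<le> norm u * (\<Lambda> * norm u)" using assms by (simp add: mult_left_mono)
  finally show ?thesis by (simp add: power2_eq_square algebra_simps)
qed

lemma psd_Cauchy_Schwarz:
  fixes B :: "'a::real_inner \<Rightarrow> 'a"
  assumes lin: "linear B" and sym: "\<forall>u v. B u \<bullet> v = u \<bullet> B v" and psd: "\<forall>u. 0 \<le> u \<bullet> B u"
  shows "(u \<bullet> B v)\<^sup>2 \<le> (u \<bullet> B u) * (v \<bullet> B v)"
proof -
  have "v \<bullet> B u = u \<bullet> B v" using sym by (metis inner_commute)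
  then have quadratic: "0 \<le> (u \<bullet> B u) + 2 * t * (u \<bullet> B v) + t\<^sup>2 * (v \<bullet> B v)" for t
    using psd[rule_format, of "u + t *\<^sub>R v"]
    by (simp add: linear_add[OF lin] linear_scale[OF lin] inner_add_left inner_add_right
        algebra_simps power2_eq_square)
  show ?thesis
  proof (cases "v \<bullet> B v = 0")
    case True
    \<comment> \<open>a nonnegative affine function of t must be constant\<close>
    have "u \<bullet> B v = 0"
    proof (rule ccontr)
      assume "u \<bullet> B v \<noteq> 0"
      then show False
        using quadratic[of "- (u \<bullet> B u + 1) / (2 * (u \<bullet> B v))"] True by (simp add: field_simps)
    qed
    then show ?thesis using True by simp
  next
    case False
    then have pos: "0 < v \<bullet> B v" using psd by (metis order_le_less)
    have "0 \<le> (u \<bullet> B u) - (u \<bullet> B v)\<^sup>2 / (v \<bullet> B v)"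
      using quadratic[of "- (u \<bullet> B v) / (v \<bullet> B v)"] pos by (simp add: field_simps power2_eq_square)
    then show ?thesis using pos by (simp add: field_simps)
  qed
qed

lemma psd_norm_apply_sq_le:
  fixes B :: "'a::real_inner \<Rightarrow> 'a"
  assumes lin: "linear B" and sym: "\<forall>u v. B u \<bullet> v = u \<bullet> B v" and psd: "\<forall>u. 0 \<le> u \<bullet> B u"
    and bound: "\<forall>u. norm (B u) \<le> \<Lambda> * norm u" and \<Lambda>: "0 \<le> \<Lambda>"
  shows "(norm (B v))\<^sup>2 \<le> \<Lambda> * (v \<bullet> B v)"
proof -
  define w where "w = B v"
  have "((norm w)\<^sup>2)\<^sup>2 = (v \<bullet> B w)\<^sup>2"
    using sym unfolding w_def by (metis power2_norm_eq_inner)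
  also have "\<dots> \<le> (v \<bullet> B v) * (w \<bullet> B w)" by (rule psd_Cauchy_Schwarz[OF lin sym psd])
  also have "\<dots> \<le> (v \<bullet> B v) * (\<Lambda> * (norm w)\<^sup>2)"
    using psd inner_le_bound_norm_sq[of B w] bound by (simp add: mult_left_mono)
  finally have *: "(norm w)\<^sup>2 * (norm w)\<^sup>2 \<le> (\<Lambda> * (v \<bullet> B v)) * (norm w)\<^sup>2"
    by (simp add: power2_eq_square algebra_simps)
  show ?thesis
  proof (cases "w = 0")
    case True
    then show ?thesis using \<Lambda> psd unfolding w_def by simp
  next
    case False
    then show ?thesis using mult_right_le_imp_le[OF *] unfolding w_def by simp
  qed
qed

lemma psd_rank_one_term_le:
  fixes B :: "'a::real_inner \<Rightarrow> 'a"
  assumes lin: "linear B" and sym: "\<forall>u v. B u \<bullet> v = u \<bullet> B v" and psd: "\<forall>u. 0 \<le> u \<bullet> B u"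
    and bound: "\<forall>u. norm (B u) \<le> \<Lambda> * norm u" and \<Lambda>: "0 \<le> \<Lambda>"
  shows "\<bar>s \<bullet> B v\<bar> * norm (B s) \<le> \<Lambda> * (s \<bullet> B s) * norm v"
proof -
  have CS: "(s \<bullet> B v)\<^sup>2 \<le> (s \<bullet> B s) * (v \<bullet> B v)" by (rule psd_Cauchy_Schwarz[OF lin sym psd])
  have Bs: "(norm (B s))\<^sup>2 \<le> \<Lambda> * (s \<bullet> B s)" by (rule psd_norm_apply_sq_le[OF lin sym psd bound \<Lambda>])
  have Bv: "v \<bullet> B v \<le> \<Lambda> * (norm v)\<^sup>2" using bound by (simp add: inner_le_bound_norm_sq)
  have ss: "0 \<le> s \<bullet> B s" and vv: "0 \<le> v \<bullet> B v" using psd by auto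
  have "(\<bar>s \<bullet> B v\<bar> * norm (B s))\<^sup>2 = (s \<bullet> B v)\<^sup>2 * (norm (B s))\<^sup>2"
    by (simp add: power_mult_distrib)
  also have "\<dots> \<le> ((s \<bullet> B s) * (v \<bullet> B v)) * (\<Lambda> * (s \<bullet> B s))"
    by (rule mult_mono[OF CS Bs]) (use ss vv in simp_all)
  also have "\<dots> \<le> ((s \<bullet> B s) * (\<Lambda> * (norm v)\<^sup>2)) * (\<Lambda> * (s \<bullet> B s))"
    by (rule mult_right_mono[OF mult_left_mono[OF Bv ss]]) (use ss \<Lambda> in simp)
  also have "\<dots> = (\<Lambda> * (s \<bullet> B s) * norm v)\<^sup>2" by (simp add: power2_eq_square)
  finally show ?thesis
    by (rule power2_le_imp_le) (use ss \<Lambda> in simp)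
qed

definition lbfgs_kappa :: "real \<Rightarrow> real \<Rightarrow> real" where
  "lbfgs_kappa cs L = 1 / (2 * (1 + 2 * L / cs)\<^sup>2)"

lemma lbfgs_kappa_pos_le_one:
  assumes "0 < cs" "0 \<le> L"
  shows "0 < lbfgs_kappa cs L" "lbfgs_kappa cs L \<le> 1"
proof -
  have "1 \<le> (1 + 2 * L / cs)\<^sup>2" using assms by (simp add: one_le_power)
  then have "1 \<le> 2 * (1 + 2 * L / cs)\<^sup>2" by linarith
  moreover have "0 < 1 + 2 * L / cs" using assms by (simp add: add_pos_nonneg)
  ultimately show "0 < lbfgs_kappa cs L" "lbfgs_kappa cs L \<le> 1"
    unfolding lbfgs_kappa_def by (simp_all add: divide_le_eq_1)
qed

lemma rank_one_term_lower_bound: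
  fixes cs ns ys t e :: real
  assumes ys: "cs * ns\<^sup>2 \<le> ys" "0 < ys" and dominant: "2 * \<bar>e\<bar> \<le> \<bar>t\<bar> * ys"
  shows "cs / 4 * (\<bar>t\<bar> * ns)\<^sup>2 \<le> (e + t * ys)\<^sup>2 / ys"
proof -
  have "\<bar>t * ys\<bar> - \<bar>e\<bar> \<le> \<bar>e + t * ys\<bar>" by linarith
  then have "\<bar>t\<bar> * ys / 2 \<le> \<bar>e + t * ys\<bar>" using dominant ys(2) by (simp add: abs_mult)
  then have "(\<bar>t\<bar> * ys / 2)\<^sup>2 \<le> \<bar>e + t * ys\<bar>\<^sup>2"
    by (rule power_mono) (use ys(2) in simp)
  then have "t\<^sup>2 * ys / 4 \<le> (e + t * ys)\<^sup>2 / ys"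
    using ys(2) by (simp add: field_simps power2_eq_square)
  moreover have "t\<^sup>2 * (cs * ns\<^sup>2) \<le> t\<^sup>2 * ys" using ys(1) by (simp add: mult_left_mono)
  ultimately show ?thesis by (simp add: power_mult_distrib algebra_simps)
qed

text \<open>The scalar core of the lower bound for the updated operator: with v = u + t s,
  nv = |v|, p = |u|, ns = |s|, e = y \<bullet> u and ys = y \<bullet> s.  Either the term t s dominates,
  and then the rank-one term (e + t ys)^2/ys controls it, or u dominates.\<close>
lemma lbfgs_lower_bound_real:
  fixes \<mu> cs L ns ys p t nv e :: real
  assumes \<mu>: "0 < \<mu>" and cs: "0 < cs" and L: "0 \<le> L" and ns: "0 < ns"
    and ys: "cs * ns\<^sup>2 \<le> ys" and p: "0 \<le> p" and nv: "0 \<le> nv" "nv \<le> p + \<bar>t\<bar> * ns"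
    and e: "\<bar>e\<bar> \<le> L * ns * p"
  shows "lbfgs_kappa cs L * min \<mu> (cs / 4) * nv\<^sup>2 \<le> \<mu> * p\<^sup>2 + (e + t * ys)\<^sup>2 / ys"
proof -
  define q where "q = \<bar>t\<bar> * ns"
  define m where "m = min \<mu> (cs / 4)"
  define D where "D = (1 + 2 * L / cs)\<^sup>2"
  have D: "1 \<le> D" unfolding D_def using L cs by (simp add: one_le_power)
  have kappa: "lbfgs_kappa cs L = 1 / (2 * D)" unfolding lbfgs_kappa_def D_def ..
  have m: "0 < m" "m \<le> \<mu>" "m \<le> cs / 4" unfolding m_def using \<mu> cs by auto
  have "0 < cs * ns\<^sup>2" using cs ns by simp
  then have ysp: "0 < ys" using ys by linarith
  have nv2: "nv\<^sup>2 \<le> (p + q)\<^sup>2" using nv unfolding q_def by (simp add: power_mono)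
  have Q: "0 \<le> (e + t * ys)\<^sup>2 / ys" using ysp by simp
  show ?thesis
  proof (cases "2 * L * ns * p \<le> \<bar>t\<bar> * ys")
    case True
    then have "cs / 4 * q\<^sup>2 \<le> (e + t * ys)\<^sup>2 / ys"
      unfolding q_def using e by (intro rank_one_term_lower_bound[OF ys ysp]) linarith
    then have "m * q\<^sup>2 \<le> (e + t * ys)\<^sup>2 / ys"
      using mult_right_mono[OF m(3) zero_le_power2[of q]] by linarith
    moreover have "m * p\<^sup>2 \<le> \<mu> * p\<^sup>2" using m by (simp add: mult_right_mono)
    moreover have "(p + q)\<^sup>2 \<le> 2 * (p\<^sup>2 + q\<^sup>2)"
      using sum_squares_bound[of p q] by (simp add: power2_sum)
    then have "m * (p + q)\<^sup>2 \<le> 2 * (m * p\<^sup>2) + 2 * (m * q\<^sup>2)"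
      using mult_left_mono[of "(p + q)\<^sup>2" "2 * (p\<^sup>2 + q\<^sup>2)" m] m by (simp add: algebra_simps)
    moreover have "m * nv\<^sup>2 \<le> m * (p + q)\<^sup>2" using nv2 m by (simp add: mult_left_mono)
    moreover have "1 / (2 * D) * m * nv\<^sup>2 \<le> m * nv\<^sup>2 / 2"
      using D m mult_right_mono[OF D zero_le_power2[of nv]] by (simp add: field_simps)
    ultimately show ?thesis unfolding kappa m_def[symmetric] by linarith
  next
    case False
    have "\<bar>t\<bar> * (cs * ns\<^sup>2) \<le> \<bar>t\<bar> * ys" using ys by (simp add: mult_left_mono)
    with False have "\<bar>t\<bar> * cs * ns * ns < 2 * L * p * ns"
      by (simp add: power2_eq_square algebra_simps)
    then have "q * cs < 2 * L * p" using ns unfolding q_def by (simp add: algebra_simps)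
    then have "q \<le> 2 * L / cs * p" using cs by (simp add: field_simps)
    then have "nv \<le> (1 + 2 * L / cs) * p" using nv unfolding q_def by (simp add: algebra_simps)
    then have "nv\<^sup>2 \<le> D * p\<^sup>2"
      unfolding D_def using nv by (metis power_mono power_mult_distrib)
    then have "m * nv\<^sup>2 \<le> \<mu> * (D * p\<^sup>2)" using m by (simp add: mult_mono)
    then have "m * nv\<^sup>2 / D \<le> \<mu> * p\<^sup>2" using D by (simp add: field_simps)
    moreover have "1 / (2 * D) * m * nv\<^sup>2 \<le> m * nv\<^sup>2 / D" using m D by (simp add: field_simps)
    ultimately show ?thesis using Q unfolding kappa m_def[symmetric] by linarith
  qed
qed

lemma lbfgs_update_linear:
  assumes "linear B"
  shows "linear (lbfgs_update B s y)"
proof (rule linearI)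
  fix a b
  show "lbfgs_update B s y (a + b) = lbfgs_update B s y a + lbfgs_update B s y b"
    unfolding lbfgs_update_def
    by (simp add: linear_add[OF assms] inner_add_right add_divide_distrib scaleR_add_left algebra_simps)
next
  fix r a
  show "lbfgs_update B s y (r *\<^sub>R a) = r *\<^sub>R lbfgs_update B s y a"
    unfolding lbfgs_update_def by (simp add: linear_scale[OF assms] scaleR_diff_right scaleR_add_right)
qed

lemma lbfgs_update_symmetric:
  assumes sym: "\<forall>u v. B u \<bullet> v = u \<bullet> B v"
  shows "lbfgs_update B s y u \<bullet> v = u \<bullet> lbfgs_update B s y v"
proof -
  have "B u \<bullet> v = u \<bullet> B v" "B s \<bullet> v = s \<bullet> B v" "s \<bullet> B u = u \<bullet> B s"
    using sym by (metis inner_commute)+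
  then show ?thesis
    unfolding lbfgs_update_def
    by (simp add: inner_add_left inner_diff_left inner_add_right inner_diff_right
        inner_commute[of v y] inner_commute[of u y]; simp add: mult.commute)
qed

lemma lbfgs_update_norm_le:
  assumes B: "spd_bounds B \<mu> \<Lambda>" and cs: "0 < cs"
    and curv: "cs * (norm s)\<^sup>2 < y \<bullet> s" and lip: "norm y \<le> L * norm s"
  shows "norm (lbfgs_update B s y v) \<le> (2 * \<Lambda> + L\<^sup>2 / cs) * norm v"
proof -
  from B have lin: "linear B" and sym: "\<forall>u v. B u \<bullet> v = u \<bullet> B v"
    and bound: "\<forall>u. norm (B u) \<le> \<Lambda> * norm u" and \<mu>: "0 < \<mu>" and \<Lambda>: "0 \<le> \<Lambda>"
    unfolding spd_bounds_def by auto
  have psd: "\<forall>u. 0 \<le> u \<bullet> B u" using spd_bounds_psd[OF B] by blast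
  have "s \<noteq> 0" using curv by auto
  then have "0 < \<mu> * (norm s)\<^sup>2" using \<mu> by simp
  then have sBs: "0 < s \<bullet> B s" using B unfolding spd_bounds_def by (meson less_le_trans)
  have "0 \<le> cs * (norm s)\<^sup>2" using cs by simp
  then have ys: "0 < y \<bullet> s" using curv by linarith
  have "norm (((y \<bullet> v) / (y \<bullet> s)) *\<^sub>R y) = \<bar>y \<bullet> v\<bar> * norm y / (y \<bullet> s)" using ys by simp
  also have "\<dots> \<le> (norm y * norm v) * norm y / (y \<bullet> s)"
    using ys by (intro divide_right_mono mult_right_mono) (auto simp: Cauchy_Schwarz_ineq2)
  also have "\<dots> = (norm y)\<^sup>2 / (y \<bullet> s) * norm v" by (simp add: power2_eq_square)
  also have "\<dots> \<le> L\<^sup>2 / cs * norm v"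
  proof (rule mult_right_mono)
    have "(norm y)\<^sup>2 \<le> L\<^sup>2 / cs * (cs * (norm s)\<^sup>2)"
      using power_mono[OF lip norm_ge_zero, of 2] cs by (simp add: power_mult_distrib)
    also have "\<dots> \<le> L\<^sup>2 / cs * (y \<bullet> s)" using curv cs by (intro mult_left_mono) auto
    finally show "(norm y)\<^sup>2 / (y \<bullet> s) \<le> L\<^sup>2 / cs" using ys by (simp add: divide_le_eq)
  qed simp
  finally have first: "norm (((y \<bullet> v) / (y \<bullet> s)) *\<^sub>R y) \<le> L\<^sup>2 / cs * norm v" .
  have "norm (((s \<bullet> B v) / (s \<bullet> B s)) *\<^sub>R B s) = \<bar>s \<bullet> B v\<bar> * norm (B s) / (s \<bullet> B s)"
    using sBs by simp
  also have "\<dots> \<le> \<Lambda> * norm v"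
    using psd_rank_one_term_le[OF lin sym psd bound \<Lambda>, of s v] sBs by (simp add: divide_le_eq mult_ac)
  finally have second: "norm (((s \<bullet> B v) / (s \<bullet> B s)) *\<^sub>R B s) \<le> \<Lambda> * norm v" .
  have "norm (lbfgs_update B s y v) \<le> norm (B v) + norm (((y \<bullet> v) / (y \<bullet> s)) *\<^sub>R y)
          + norm (((s \<bullet> B v) / (s \<bullet> B s)) *\<^sub>R B s)"
    unfolding lbfgs_update_def by (meson norm_triangle_ineq norm_triangle_ineq4 add_mono order_trans order_refl)
  then show ?thesis using first second bound[rule_format, of v] by (simp add: algebra_simps)
qed

text \<open>Completing the square: the BFGS update keeps the part of B orthogonal to s
  (in the B inner product) and replaces the s-direction by the curvature pair.\<close>
lemma lbfgs_update_quadratic_form: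
  assumes lin: "linear B" and sym: "\<forall>u v. B u \<bullet> v = u \<bullet> B v" and sBs: "s \<bullet> B s \<noteq> 0"
    and t: "t = (s \<bullet> B v) / (s \<bullet> B s)"
  shows "v \<bullet> lbfgs_update B s y v = (v - t *\<^sub>R s) \<bullet> B (v - t *\<^sub>R s) + (y \<bullet> v)\<^sup>2 / (y \<bullet> s)"
proof -
  have vBs: "v \<bullet> B s = s \<bullet> B v" using sym by (metis inner_commute)
  have "(v - t *\<^sub>R s) \<bullet> B (v - t *\<^sub>R s) = v \<bullet> B v - 2 * t * (s \<bullet> B v) + t\<^sup>2 * (s \<bullet> B s)"
    using vBs by (simp add: linear_diff[OF lin] linear_scale[OF lin] inner_diff_left inner_diff_right
        power2_eq_square algebra_simps)
  also have "\<dots> = v \<bullet> B v - (s \<bullet> B v)\<^sup>2 / (s \<bullet> B s)"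
    unfolding t using sBs by (simp add: field_simps power2_eq_square)
  finally show ?thesis
    unfolding lbfgs_update_def using vBs
    by (simp add: inner_add_right inner_diff_right power2_eq_square inner_commute[of v y])
qed

lemma lbfgs_update_spd_bounds:
  assumes B: "spd_bounds B \<mu> \<Lambda>" and cs: "0 < cs" and L: "0 \<le> L"
    and curv: "cs * (norm s)\<^sup>2 < y \<bullet> s" and lip: "norm y \<le> L * norm s"
  shows "spd_bounds (lbfgs_update B s y) (lbfgs_kappa cs L * min \<mu> (cs / 4)) (2 * \<Lambda> + L\<^sup>2 / cs)"
proof -
  from B have lin: "linear B" and sym: "\<forall>u v. B u \<bullet> v = u \<bullet> B v"
    and pos: "\<forall>u. \<mu> * (norm u)\<^sup>2 \<le> u \<bullet> B u" and \<mu>: "0 < \<mu>" and \<Lambda>: "0 \<le> \<Lambda>"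
    unfolding spd_bounds_def by auto
  have "s \<noteq> 0" using curv by auto
  then have "0 < \<mu> * (norm s)\<^sup>2" using \<mu> by simp
  then have sBs: "0 < s \<bullet> B s" using pos by (meson less_le_trans)
  have lower: "lbfgs_kappa cs L * min \<mu> (cs / 4) * (norm v)\<^sup>2 \<le> v \<bullet> lbfgs_update B s y v" for v
  proof -
    define t where "t = (s \<bullet> B v) / (s \<bullet> B s)"
    define u where "u = v - t *\<^sub>R s"
    have "lbfgs_kappa cs L * min \<mu> (cs / 4) * (norm v)\<^sup>2 \<le> \<mu> * (norm u)\<^sup>2 + (y \<bullet> u + t * (y \<bullet> s))\<^sup>2 / (y \<bullet> s)"
    proof (rule lbfgs_lower_bound_real[OF \<mu> cs L])
      show "0 < norm s" using \<open>s \<noteq> 0\<close> by simp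
      show "cs * (norm s)\<^sup>2 \<le> y \<bullet> s" using curv by simp
      have "v = u + t *\<^sub>R s" unfolding u_def by simp
      then show "norm v \<le> norm u + \<bar>t\<bar> * norm s" by (metis norm_scaleR norm_triangle_ineq)
      show "\<bar>y \<bullet> u\<bar> \<le> L * norm s * norm u"
        using Cauchy_Schwarz_ineq2[of y u] mult_right_mono[OF lip norm_ge_zero[of u]] by linarith
    qed simp_all
    also have "\<dots> \<le> u \<bullet> B u + (y \<bullet> v)\<^sup>2 / (y \<bullet> s)"
      using pos unfolding u_def by (simp add: inner_diff_right)
    also have "\<dots> = v \<bullet> lbfgs_update B s y v"
      using lbfgs_update_quadratic_form[OF lin sym _ t_def] sBs unfolding u_def by simp
    finally show ?thesis .
  qed
  have "0 < lbfgs_kappa cs L * min \<mu> (cs / 4)"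
    using lbfgs_kappa_pos_le_one[OF cs L] \<mu> cs by simp
  then show ?thesis
    unfolding spd_bounds_def
    using lbfgs_update_linear[OF lin] lbfgs_update_symmetric[OF sym] lower
      lbfgs_update_norm_le[OF B cs curv lip] \<Lambda> cs by auto
qed

lemma lbfgs_updates_spd_bounds:
  assumes "spd_bounds B \<mu> \<Lambda>" "0 < cs" "0 \<le> L"
    and "\<forall>j\<in>set js. cs * (norm (s j))\<^sup>2 < y j \<bullet> s j \<and> norm (y j) \<le> L * norm (s j)"
    and "length js \<le> n"
  shows "spd_bounds (foldl (\<lambda>B j. lbfgs_update B (s j) (y j)) B js)
           (lbfgs_kappa cs L ^ n * min \<mu> (cs / 4)) (2 ^ n * (\<Lambda> + L\<^sup>2 / cs))"
  using assms
proof (induction js arbitrary: B \<mu> \<Lambda> n)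
  case Nil
  have \<mu>: "0 < \<mu>" and \<Lambda>: "0 \<le> \<Lambda>" using Nil(1) unfolding spd_bounds_def by auto
  have \<kappa>: "0 < lbfgs_kappa cs L ^ n" "lbfgs_kappa cs L ^ n \<le> 1"
    using lbfgs_kappa_pos_le_one[OF Nil(2,3)] by (simp_all add: power_le_one)
  have "lbfgs_kappa cs L ^ n * min \<mu> (cs / 4) \<le> min \<mu> (cs / 4)"
    using \<kappa> \<mu> Nil(2) by (intro mult_left_le_one_le) auto
  then have "lbfgs_kappa cs L ^ n * min \<mu> (cs / 4) \<le> \<mu>" by linarith
  moreover have "\<Lambda> \<le> 2 ^ n * (\<Lambda> + L\<^sup>2 / cs)"
  proof -
    have "0 \<le> L\<^sup>2 / cs" using Nil(2) by simp
    then show ?thesis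
      using \<Lambda> mult_right_mono[OF one_le_power[of 2 n], of "\<Lambda> + L\<^sup>2 / cs"] by simp
  qed
  moreover have "0 < lbfgs_kappa cs L ^ n * min \<mu> (cs / 4)" using \<kappa> \<mu> Nil(2) by simp
  ultimately show ?case using spd_bounds_mono[OF Nil(1)] by simp
next
  case (Cons j js)
  obtain m where n: "n = Suc m" and len: "length js \<le> m" using Cons(6) by (cases n) auto
  let ?\<kappa> = "lbfgs_kappa cs L"
  have updated: "spd_bounds (lbfgs_update B (s j) (y j)) (?\<kappa> * min \<mu> (cs / 4)) (2 * \<Lambda> + L\<^sup>2 / cs)"
    using lbfgs_update_spd_bounds[OF Cons(2,3,4)] Cons(5) by simp
  have "0 \<le> min \<mu> (cs / 4)" using Cons(2,3) unfolding spd_bounds_def by simp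
  then have "?\<kappa> * min \<mu> (cs / 4) \<le> cs / 4"
    using lbfgs_kappa_pos_le_one[OF Cons(3,4)] by (meson min.cobounded2 mult_left_le_one_le order_trans less_imp_le)
  then have "min (?\<kappa> * min \<mu> (cs / 4)) (cs / 4) = ?\<kappa> * min \<mu> (cs / 4)" by simp
  then have "spd_bounds (foldl (\<lambda>B j. lbfgs_update B (s j) (y j)) (lbfgs_update B (s j) (y j)) js)
      (?\<kappa> ^ m * (?\<kappa> * min \<mu> (cs / 4))) (2 ^ m * ((2 * \<Lambda> + L\<^sup>2 / cs) + L\<^sup>2 / cs))"
    using Cons.IH[OF updated Cons(3,4) _ len] Cons(5) by simp
  moreover have "?\<kappa> ^ m * (?\<kappa> * min \<mu> (cs / 4)) = ?\<kappa> ^ n * min \<mu> (cs / 4)"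
    unfolding n by (simp add: mult_ac)
  moreover have "2 ^ m * ((2 * \<Lambda> + L\<^sup>2 / cs) + L\<^sup>2 / cs) = 2 ^ n * (\<Lambda> + L\<^sup>2 / cs)"
    unfolding n by (simp add: algebra_simps)
  ultimately show ?case by simp
qed

section \<open>The safeguarded scaling and the seed operator\<close>

lemma omega_l_le: "omega_l c0 c1 c2 gn \<le> c0"
  unfolding omega_l_def by simp

lemma omega_l_nonneg: "0 \<le> c0 \<Longrightarrow> 0 \<le> c1 \<Longrightarrow> 0 \<le> omega_l c0 c1 c2 gn"
  unfolding omega_l_def by simp

lemma omega_l_ge:
  assumes "0 \<le> c0" "0 \<le> c1"
  shows "min c0 c1 * min 1 (gn powr c2) \<le> omega_l c0 c1 c2 gn"
proof (cases "gn powr c2 \<le> 1")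
  case True
  have "min c0 c1 * gn powr c2 \<le> c0 * gn powr c2" "min c0 c1 * gn powr c2 \<le> c1 * gn powr c2"
    using assms by (simp_all add: mult_right_mono)
  moreover have "c0 * gn powr c2 \<le> c0" using True assms by (simp add: mult_left_le)
  ultimately show ?thesis using True unfolding omega_l_def by simp
next
  case False
  then have "c1 \<le> c1 * gn powr c2" using assms by (simp add: mult_le_cancel_left1)
  then show ?thesis using False unfolding omega_l_def by simp
qed

lemma projP_ge_omega_l:
  assumes "ereal c0 \<le> C0"
  shows "omega_l c0 c1 c2 gn \<le> projP c0 C0 c1 c2 gn t"
proof -
  have "ereal (omega_l c0 c1 c2 gn) \<le> omega_u C0 c1 c2 gn"
    using assms omega_l_le[of c0 c1 c2 gn] unfolding omega_u_def
    by (meson ereal_less_eq(3) max.coboundedI1 order_trans)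
  then show ?thesis
    unfolding projP_def
    by (cases "omega_u C0 c1 c2 gn") (simp_all add: min_def max_def del: ereal_max ereal_min)
qed

lemma projP_le_finite:
  "C0 = ereal C \<Longrightarrow> projP c0 C0 c1 c2 gn t \<le> max C (inverse (c1 * gn powr c2))"
  unfolding projP_def omega_u_def by (simp add: min_def max_def)

lemma projP_infinite: "C0 = \<infinity> \<Longrightarrow> projP c0 C0 c1 c2 gn t = max t (omega_l c0 c1 c2 gn)"
  unfolding projP_def omega_u_def by (simp del: ereal_max ereal_min)

lemma min_one_powr_mult_max_one_powr:
  fixes G p :: real
  assumes "0 < G"
  shows "min 1 (G powr p) * max 1 (G powr - p) = 1"
proof (cases "G powr p \<le> 1")
  case True
  then have "1 \<le> G powr - p" using assms by (simp add: powr_minus field_simps)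
  then show ?thesis using True assms by (simp add: powr_minus)
next
  case False
  then have "G powr - p \<le> 1" using assms by (simp add: powr_minus field_simps)
  then show ?thesis using False by simp
qed

lemma min_one_powr_double:
  fixes G p :: real
  shows "min 1 (G powr (2 * p)) = min 1 (G powr p) * min 1 (G powr p)"
proof -
  have "G powr (2 * p) = G powr p * G powr p" by (simp add: powr_add[symmetric])
  moreover have "min 1 (q * q) = min 1 q * min 1 q" if "0 \<le> q" for q :: real
    using that mult_le_one[of q q] less_1_mult[of q q] by (cases "q \<le> 1") auto
  ultimately show ?thesis by simp
qed

lemma slbfgs_B0_apply: "slbfgs_B0 \<tau> S k u = \<tau> k *\<^sub>R u + blinfun_apply (S k) u"
  unfolding slbfgs_B0_def ..

lemma slbfgs_B0_structure:
  fixes S :: "nat \<Rightarrow> 'a::real_inner \<Rightarrow>\<^sub>L 'a"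
  assumes S: "sym_psd (S k)" and norm_S: "norm (S k) \<le> Ms" and \<tau>: "0 \<le> \<tau> k"
  shows "linear (slbfgs_B0 \<tau> S k)" "\<forall>u v. slbfgs_B0 \<tau> S k u \<bullet> v = u \<bullet> slbfgs_B0 \<tau> S k v"
    "\<tau> k * (norm u)\<^sup>2 \<le> u \<bullet> slbfgs_B0 \<tau> S k u"
    "norm (slbfgs_B0 \<tau> S k u) \<le> (\<tau> k + Ms) * norm u"
proof -
  show "linear (slbfgs_B0 \<tau> S k)"
    by (rule linearI) (simp_all add: slbfgs_B0_apply blinfun.add_right blinfun.scaleR_right algebra_simps)
  show "\<forall>u v. slbfgs_B0 \<tau> S k u \<bullet> v = u \<bullet> slbfgs_B0 \<tau> S k v"
    using S unfolding sym_psd_def by (simp add: slbfgs_B0_apply inner_add_left inner_add_right inner_commute)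
  have "0 \<le> u \<bullet> blinfun_apply (S k) u" using S unfolding sym_psd_def by (metis inner_commute)
  then show "\<tau> k * (norm u)\<^sup>2 \<le> u \<bullet> slbfgs_B0 \<tau> S k u"
    by (simp add: slbfgs_B0_apply inner_add_right power2_norm_eq_inner)
  have "norm (blinfun_apply (S k) u) \<le> Ms * norm u"
    using norm_blinfun[of "S k" u] norm_S by (meson mult_right_mono norm_ge_zero order_trans)
  then show "norm (slbfgs_B0 \<tau> S k u) \<le> (\<tau> k + Ms) * norm u"
    unfolding slbfgs_B0_apply using \<tau> norm_triangle_ineq[of "\<tau> k *\<^sub>R u" "blinfun_apply (S k) u"]
    by (simp add: distrib_right)
qed

lemma spd_bounds_slbfgs_B0:
  fixes S :: "nat \<Rightarrow> 'a::real_inner \<Rightarrow>\<^sub>L 'a"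
  assumes S: "sym_psd (S k)" and norm_S: "norm (S k) \<le> Ms" and \<tau>: "0 \<le> \<tau> k"
    and \<mu>: "0 < \<mu>" "\<mu> \<le> \<tau> k \<or> (\<forall>v. norm v \<le> M * norm (slbfgs_B0 \<tau> S k v)) \<and> \<mu> * M\<^sup>2 * (\<tau> k + Ms) \<le> 1"
  shows "spd_bounds (slbfgs_B0 \<tau> S k) \<mu> (\<tau> k + Ms)"
proof -
  note B0 = slbfgs_B0_structure[where \<tau>=\<tau> and S=S and k=k, OF S norm_S \<tau>]
  have Ms: "0 \<le> Ms" using norm_S norm_ge_zero order_trans by blast
  have psd: "\<forall>u. 0 \<le> u \<bullet> slbfgs_B0 \<tau> S k u"
    using B0(3) \<tau> by (meson order_trans mult_nonneg_nonneg zero_le_power2)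
  have "\<mu> * (norm u)\<^sup>2 \<le> u \<bullet> slbfgs_B0 \<tau> S k u" for u
    using \<mu>(2)
  proof
    assume "\<mu> \<le> \<tau> k"
    then show ?thesis using B0(3)[of u] by (meson mult_right_mono order_trans zero_le_power2)
  next
    assume inverse: "(\<forall>v. norm v \<le> M * norm (slbfgs_B0 \<tau> S k v)) \<and> \<mu> * M\<^sup>2 * (\<tau> k + Ms) \<le> 1"
    have "(norm u)\<^sup>2 \<le> M\<^sup>2 * (norm (slbfgs_B0 \<tau> S k u))\<^sup>2"
      using inverse power_mono[of "norm u" "M * norm (slbfgs_B0 \<tau> S k u)" 2]
      by (simp add: power_mult_distrib)
    also have "\<dots> \<le> M\<^sup>2 * ((\<tau> k + Ms) * (u \<bullet> slbfgs_B0 \<tau> S k u))"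
      using psd_norm_apply_sq_le[OF B0(1,2) psd] B0(4) \<tau> Ms by (simp add: mult_left_mono)
    finally have "\<mu> * (norm u)\<^sup>2 \<le> (\<mu> * M\<^sup>2 * (\<tau> k + Ms)) * (u \<bullet> slbfgs_B0 \<tau> S k u)"
      using \<mu>(1) by (simp add: mult_left_mono mult.assoc)
    also have "\<dots> \<le> u \<bullet> slbfgs_B0 \<tau> S k u"
      using inverse psd mult_right_mono[of "\<mu> * M\<^sup>2 * (\<tau> k + Ms)" 1] by simp
    finally show ?thesis .
  qed
  then show ?thesis
    unfolding spd_bounds_def using B0 \<mu>(1) \<tau> Ms by auto
qed

section \<open>Estimates for the search direction\<close>

lemma spd_bounds_solution_estimates:
  assumes B: "spd_bounds B \<mu> \<Lambda>" and Bd: "B d = - g" and g: "g \<noteq> 0"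
  shows "d \<noteq> 0" "norm g \<le> \<Lambda> * norm d" "\<mu> * norm d \<le> norm g" "\<mu> * norm d \<le> \<bar>g \<bullet> d\<bar> / norm d"
proof -
  from B have lin: "linear B" and pos: "\<mu> * (norm d)\<^sup>2 \<le> d \<bullet> B d"
    and bound: "norm (B d) \<le> \<Lambda> * norm d" unfolding spd_bounds_def by auto
  show d: "d \<noteq> 0" using Bd g linear_0[OF lin] by auto
  show "norm g \<le> \<Lambda> * norm d" using bound Bd by simp
  have "d \<bullet> B d \<le> norm d * norm g"
    using Cauchy_Schwarz_ineq2[of d "B d"] Bd by simp
  with pos have "(\<mu> * norm d) * norm d \<le> norm g * norm d"
    by (simp add: power2_eq_square algebra_simps)
  then show "\<mu> * norm d \<le> norm g" using d by simp
  have "\<bar>g \<bullet> d\<bar> = d \<bullet> B d"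
    using Bd spd_bounds_psd[OF B, of d] by (simp add: inner_commute)
  then show "\<mu> * norm d \<le> \<bar>g \<bullet> d\<bar> / norm d"
    using pos d by (simp add: field_simps power2_eq_square)
qed

text \<open>The estimates rest on min 1 (|g| powr p) * max 1 (|g| powr -p) = 1.\<close>
lemma spd_bounds_direction_estimates:
  assumes B: "spd_bounds B \<mu> \<Lambda>" and Bd: "B d = - g" and g: "g \<noteq> 0"
    and c: "0 < c" and C: "1 \<le> C"
    and \<mu>: "c * min 1 (norm g powr p) \<le> \<mu>" and \<Lambda>: "\<Lambda> \<le> C * max 1 (norm g powr - p)"
  shows "1 / C * min 1 (norm g powr p) \<le> norm d / norm g"
    and "norm d / norm g \<le> C / c * max 1 (norm g powr - p)"
    and "inverse (C / c) * norm g * min 1 (norm g powr (2 * p)) \<le> \<bar>g \<bullet> d\<bar> / norm d"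
proof -
  define m where "m = min 1 (norm g powr p)"
  define X where "X = max 1 (norm g powr - p)"
  have G: "0 < norm g" using g by simp
  have mX: "m * X = 1" unfolding m_def X_def using min_one_powr_mult_max_one_powr[OF G] .
  have m: "0 < m" "m \<le> 1" and X: "1 \<le> X" unfolding m_def X_def using G by auto
  note est = spd_bounds_solution_estimates[OF B Bd g]
  have D: "0 < norm d" using est(1) by simp
  have \<Lambda>pos: "0 < \<Lambda>" using est(2) G D by (metis mult_nonpos_nonneg not_le order_le_less_trans norm_ge_zero)
  have "\<Lambda> * m \<le> C * X * m" using \<Lambda> m unfolding X_def by (simp add: mult_right_mono)
  then have "\<Lambda> * m \<le> C" using mX by (simp add: mult.assoc mult.commute[of X])
  then have m_\<Lambda>: "m / C \<le> 1 / \<Lambda>" using \<Lambda>pos C by (simp add: field_simps)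
  have g_\<Lambda>: "norm g / \<Lambda> \<le> norm d" using est(2) \<Lambda>pos by (simp add: field_simps)
  have "c * m * X \<le> \<mu> * X" using \<mu> X unfolding m_def by (simp add: mult_right_mono)
  then have "c \<le> \<mu> * X" using mX by (simp add: mult.assoc)
  moreover have \<mu>pos: "0 < \<mu>" using B unfolding spd_bounds_def by simp
  ultimately have \<mu>_X: "1 / \<mu> \<le> X / c" using c by (simp add: field_simps)
  have gmC: "norm g * (m / C) \<le> norm d"
    using mult_left_mono[OF m_\<Lambda> norm_ge_zero[of g]] g_\<Lambda> by simp
  then have "m / C \<le> norm d / norm g" using G by (simp add: pos_le_divide_eq mult.commute)
  then show "1 / C * min 1 (norm g powr p) \<le> norm d / norm g" unfolding m_def by simp
  have "norm d / norm g \<le> 1 / \<mu>" using est(3) \<mu>pos G by (simp add: field_simps)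
  also have "\<dots> \<le> X / c" by (rule \<mu>_X)
  also have "\<dots> \<le> C * X / c" using C X c by (intro divide_right_mono) (simp_all add: mult_le_cancel_right1)
  finally show "norm d / norm g \<le> C / c * max 1 (norm g powr - p)" unfolding X_def by simp
  from gmC have "norm g * m / C \<le> norm d" by simp
  then have "c * m * (norm g * m / C) \<le> \<mu> * norm d"
    by (rule mult_mono[OF \<mu>[folded m_def]]) (use c m C \<mu>pos in auto)
  then show "inverse (C / c) * norm g * min 1 (norm g powr (2 * p)) \<le> \<bar>g \<bullet> d\<bar> / norm d"
    using est(4) unfolding min_one_powr_double m_def[symmetric] by (simp add: field_simps)
qed

lemma tau_admissible_ge_omega_l:
  assumes "ereal c0 \<le> C0" "tau_admissible c0 C0 c1 c2 gn s z t"
  shows "omega_l c0 c1 c2 gn \<le> t"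
proof -
  have "omega_l c0 c1 c2 gn \<le> tau_s c0 C0 c1 c2 gn s z"
    unfolding tau_s_def by (rule projP_ge_omega_l[OF assms(1)])
  moreover have "tau_s c0 C0 c1 c2 gn s z \<le> t" using assms(2) unfolding tau_admissible_def by simp
  ultimately show ?thesis by linarith
qed

lemma tau_admissible_le_finite:
  assumes C0: "C0 = ereal C" "0 \<le> C" and c1: "0 < c1" and gn: "0 < gn"
    and t: "tau_admissible c0 C0 c1 c2 gn s z t"
  shows "t \<le> (C + 1 / c1) * max 1 (gn powr - c2)"
proof -
  obtain r where "t \<le> projP c0 C0 c1 c2 gn r"
    using t unfolding tau_admissible_def tau_z_def tau_g_def by (cases "0 < z \<bullet> s") auto
  then have "t \<le> max C (inverse (c1 * gn powr c2))"
    using projP_le_finite[OF C0(1), of c0 c1 c2 gn r] by linarith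
  also have "\<dots> \<le> C * max 1 (gn powr - c2) + 1 / c1 * max 1 (gn powr - c2)"
  proof -
    have "inverse (c1 * gn powr c2) = 1 / c1 * gn powr - c2"
      using gn c1 by (simp add: powr_minus divide_inverse mult.commute)
    moreover have "1 / c1 * gn powr - c2 \<le> 1 / c1 * max 1 (gn powr - c2)"
      using c1 by (intro mult_left_mono) auto
    moreover have "C \<le> C * max 1 (gn powr - c2)" using C0(2) by (simp add: mult_le_cancel_left1)
    moreover have "0 \<le> C * max 1 (gn powr - c2)" "0 \<le> 1 / c1 * max 1 (gn powr - c2)"
      using C0(2) c1 by simp_all
    ultimately show ?thesis by linarith
  qed
  finally show ?thesis by (simp add: algebra_simps)
qed

lemma tau_g_le_infinite:
  assumes "C0 = \<infinity>" "norm z \<le> M * norm s" "0 \<le> M"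
  shows "tau_g c0 C0 c1 c2 gn s z \<le> max M c0"
proof -
  have "norm z / norm s \<le> M"
    using assms(2,3) by (cases "s = 0") (simp_all add: divide_le_eq)
  then show ?thesis
    unfolding tau_g_def projP_infinite[OF assms(1)] using omega_l_le[of c0 c1 c2 gn]
    by (auto simp: le_max_iff_disj)
qed

lemma tau_z_le_infinite:
  assumes "C0 = \<infinity>" and G: "sym_psd G" "norm G \<le> M" and Gs: "blinfun_apply G s = z"
    and curv: "0 < z \<bullet> s"
  shows "tau_z c0 C0 c1 c2 gn s z \<le> max M c0"
proof -
  have "linear (blinfun_apply G)" by (rule bounded_linear.linear[OF blinfun.bounded_linear_right])
  moreover have "\<forall>u v. blinfun_apply G u \<bullet> v = u \<bullet> blinfun_apply G v" "\<forall>u. 0 \<le> u \<bullet> blinfun_apply G u"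
    using G(1) unfolding sym_psd_def by (auto simp: inner_commute)
  moreover have "\<forall>u. norm (blinfun_apply G u) \<le> norm G * norm u" by (simp add: norm_blinfun)
  ultimately have "(norm z)\<^sup>2 \<le> norm G * (z \<bullet> s)"
    using psd_norm_apply_sq_le[of "blinfun_apply G" "norm G" s] Gs by (simp add: inner_commute)
  also have "\<dots> \<le> M * (z \<bullet> s)" using G(2) curv by (simp add: mult_right_mono)
  finally have "(norm z)\<^sup>2 / (z \<bullet> s) \<le> M" using curv by (simp add: divide_le_eq)
  then show ?thesis
    unfolding tau_z_def projP_infinite[OF assms(1)] using omega_l_le[of c0 c1 c2 gn]
    by (auto simp: le_max_iff_disj)
qed

section \<open>Integrals of operator-valued functions\<close>

text \<open>Integrating continuous functions needs a codomain of class banach, which a type variable of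
  sort real_normed_vector and complete_space does not have.  A copy of such a type is made an
  instance of banach, and operator-valued functions are integrated after composing with the copy.\<close>
typedef (overloaded) 'a banach_copy = "UNIV :: 'a::{real_normed_vector, complete_space} set"
  morphisms uncopy copy by auto

setup_lifting type_definition_banach_copy

instantiation banach_copy :: ("{real_normed_vector, complete_space}") real_normed_vector
begin
lift_definition norm_banach_copy :: "'a banach_copy \<Rightarrow> real" is norm .
lift_definition minus_banach_copy :: "'a banach_copy \<Rightarrow> 'a banach_copy \<Rightarrow> 'a banach_copy" is "(-)" .
lift_definition plus_banach_copy :: "'a banach_copy \<Rightarrow> 'a banach_copy \<Rightarrow> 'a banach_copy" is "(+)" .
lift_definition uminus_banach_copy :: "'a banach_copy \<Rightarrow> 'a banach_copy" is uminus .
lift_definition zero_banach_copy :: "'a banach_copy" is 0 .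
lift_definition scaleR_banach_copy :: "real \<Rightarrow> 'a banach_copy \<Rightarrow> 'a banach_copy" is scaleR .
definition dist_banach_copy :: "'a banach_copy \<Rightarrow> 'a banach_copy \<Rightarrow> real"
  where "dist_banach_copy a b = norm (a - b)"
definition uniformity_banach_copy :: "('a banach_copy \<times> 'a banach_copy) filter"
  where "uniformity_banach_copy = (INF e\<in>{0 <..}. principal {(x, y). dist x y < e})"
definition open_banach_copy :: "'a banach_copy set \<Rightarrow> bool"
  where "open_banach_copy S = (\<forall>x\<in>S. \<forall>\<^sub>F (x', y) in uniformity. x' = x \<longrightarrow> y \<in> S)"
definition sgn_banach_copy :: "'a banach_copy \<Rightarrow> 'a banach_copy"
  where "sgn_banach_copy x = scaleR (inverse (norm x)) x"
instance
  by standard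
    (unfold dist_banach_copy_def open_banach_copy_def sgn_banach_copy_def uniformity_banach_copy_def,
     (rule refl | (transfer, force simp: norm_triangle_ineq algebra_simps))+)
end

lemma dist_uncopy: "dist (uncopy a) (uncopy b) = dist a b"
  unfolding dist_banach_copy_def dist_norm by transfer simp

instance banach_copy :: ("{real_normed_vector, complete_space}") banach
proof
  fix X :: "nat \<Rightarrow> 'a banach_copy"
  assume "Cauchy X"
  then have "Cauchy (\<lambda>n. uncopy (X n))" unfolding Cauchy_def dist_uncopy .
  then obtain l where "(\<lambda>n. uncopy (X n)) \<longlonglongrightarrow> l" using Cauchy_convergent_iff convergent_def by blast
  moreover have "dist (X n) (copy l) = dist (uncopy (X n)) l" for n
    using dist_uncopy[of "X n" "copy l"] by (simp add: copy_inverse)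
  ultimately have "X \<longlonglongrightarrow> copy l" unfolding tendsto_iff by simp
  then show "convergent X" by (rule convergentI)
qed

lemma bounded_linear_copy: "bounded_linear copy"
proof
  show "copy (a + b) = copy a + copy b" "copy (r *\<^sub>R a) = r *\<^sub>R copy a" for a b and r :: real
    by (simp_all add: plus_banach_copy.abs_eq scaleR_banach_copy.abs_eq)
  show "\<exists>K. \<forall>x. norm (copy x) \<le> norm x * K"
    by (rule exI[of _ 1]) (simp add: norm_banach_copy.abs_eq)
qed

lemma bounded_linear_uncopy: "bounded_linear uncopy"
proof
  show "uncopy (a + b) = uncopy a + uncopy b" "uncopy (r *\<^sub>R a) = r *\<^sub>R uncopy a" for a b and r :: real
    by (transfer, simp)+
  show "\<exists>K. \<forall>x. norm (uncopy x) \<le> norm x * K"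
    by (rule exI[of _ 1]) (simp add: norm_banach_copy.rep_eq)
qed

lemma integrable_continuous_blinfun:
  fixes F :: "real \<Rightarrow> ('a::real_normed_vector \<Rightarrow>\<^sub>L 'b::{real_normed_vector, complete_space})"
  assumes "continuous_on {a..b} F"
  shows "F integrable_on {a..b}"
proof -
  define W :: "'b \<Rightarrow>\<^sub>L 'b banach_copy" where "W = Blinfun copy"
  define U :: "'b banach_copy \<Rightarrow>\<^sub>L 'b" where "U = Blinfun uncopy"
  have "continuous_on {a..b} (\<lambda>t. W o\<^sub>L F t)"
    by (intro continuous_intros assms)
  then obtain I where "((\<lambda>t. W o\<^sub>L F t) has_integral I) {a..b}"
    using integrable_continuous_interval by blast
  from has_integral_linear[OF this bounded_bilinear.bounded_linear_right[OF bounded_bilinear_blinfun_compose, of U]]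
  have "((\<lambda>t. U o\<^sub>L (W o\<^sub>L F t)) has_integral U o\<^sub>L I) {a..b}" by (simp add: o_def)
  moreover have "(\<lambda>t. U o\<^sub>L (W o\<^sub>L F t)) = F"
    unfolding U_def W_def
    by (intro ext blinfun_eqI) (simp add: bounded_linear_Blinfun_apply bounded_linear_copy
        bounded_linear_uncopy copy_inverse)
  ultimately show ?thesis by auto
qed

lemma integral_derivative_segment_apply:
  fixes g :: "'a::{real_inner, complete_space} \<Rightarrow> 'a" and H :: "'a \<Rightarrow> ('a \<Rightarrow>\<^sub>L 'a)"
  assumes der: "\<And>z. (g has_derivative blinfun_apply (H z)) (at z)" and cont: "continuous_on UNIV H"
  shows "blinfun_apply (integral {0..1} (\<lambda>t. H (a + t *\<^sub>R s))) s = g (a + s) - g a"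
proof -
  define F where "F t = H (a + t *\<^sub>R s)" for t
  define I where "I = integral {0..1} F"
  have "continuous_on {0..1} F"
    unfolding F_def by (rule continuous_on_compose2[OF cont]) (auto intro!: continuous_intros)
  then have hasI: "(F has_integral I) {0..1}"
    unfolding I_def by (rule integrable_integral[OF integrable_continuous_blinfun])
  \<comment> \<open>tested against vectors w: the fundamental theorem of calculus needs a banach codomain\<close>
  have tested: "w \<bullet> blinfun_apply I s = w \<bullet> (g (a + s) - g a)" for w
  proof -
    have "bounded_linear (\<lambda>A. w \<bullet> blinfun_apply A s)"
      by (intro bounded_linear_compose[OF bounded_linear_inner_right] bounded_linear_apply_blinfun)
    from has_integral_linear[OF hasI this]
    have "((\<lambda>t. w \<bullet> blinfun_apply (F t) s) has_integral w \<bullet> blinfun_apply I s) {0..1}"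
      by (simp add: o_def)
    moreover have "((\<lambda>t. w \<bullet> blinfun_apply (F t) s) has_integral w \<bullet> g (a + s) - w \<bullet> g a) {0..1}"
    proof -
      have "((\<lambda>t. w \<bullet> g (a + t *\<^sub>R s)) has_vector_derivative w \<bullet> blinfun_apply (F t) s)
              (at t within {0..1})" for t
        unfolding has_vector_derivative_def F_def
        by (rule has_derivative_inner_right[OF has_derivative_compose[OF _ der], THEN has_derivative_eq_rhs])
          (auto intro!: derivative_eq_intros simp: blinfun.scaleR_right)
      from fundamental_theorem_of_calculus[OF _ this] show ?thesis by simp
    qed
    ultimately show ?thesis by (simp add: has_integral_unique inner_diff_right)
  qed
  have "(blinfun_apply I s - (g (a + s) - g a)) \<bullet> (blinfun_apply I s - (g (a + s) - g a)) = 0"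
    using tested[of "blinfun_apply I s - (g (a + s) - g a)"] by (simp add: inner_diff_right)
  then show ?thesis unfolding I_def F_def by simp
qed

section \<open>Runs of the algorithm\<close>

lemma set_stored_pairs:
  "j \<in> set (stored_pairs cs ell s y k) \<longleftrightarrow> k - ell \<le> j \<and> j < k \<and> cs * (norm (s j))\<^sup>2 < y j \<bullet> s j"
  unfolding stored_pairs_def by auto

lemma length_stored_pairs_le: "length (stored_pairs cs ell s y k) \<le> ell"
  unfolding stored_pairs_def by (rule order_trans[OF length_filter_le]) simp

lemma min_mult_le_min:
  fixes a b m :: real
  assumes "m \<le> 1" "0 \<le> m" "0 \<le> a" "0 \<le> b"
  shows "min a b * m \<le> min (a * m) b"
proof -
  have "min a b * m \<le> min a b" using assms(3,4) by (intro mult_left_le[OF assms(1)]) simp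
  moreover have "min a b * m \<le> a * m" using assms by (simp add: mult_right_mono)
  ultimately show ?thesis by simp
qed

lemma armijo_no_increase:
  assumes "armijo J gJ \<sigma> x d a" "0 \<le> a" "0 \<le> \<sigma>" "gJ x \<bullet> d \<le> 0"
  shows "J (x + a *\<^sub>R d) \<le> J x"
proof -
  have "a * \<sigma> * (gJ x \<bullet> d) \<le> 0" using assms(2-4) by (simp add: mult_nonneg_nonpos)
  then show ?thesis using assms(1) unfolding armijo_def by linarith
qed

text \<open>MS bounds the operators S k (Assumption 3), MB is the constant of Assumption 5 and
  \<sigma> the Armijo parameter: of the line search only the Armijo decrease is used.\<close>
locale slbfgs_run =
  fixes J :: "'a::{real_inner, complete_space} \<Rightarrow> real" and gJ :: "'a \<Rightarrow> 'a"
    and x d :: "nat \<Rightarrow> 'a" and \<alpha> \<tau> :: "nat \<Rightarrow> real" and S :: "nat \<Rightarrow> 'a \<Rightarrow>\<^sub>L 'a"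
    and K :: enat and eps c0 cs c1 c2 L \<sigma> MS MB :: real and C0 :: ereal and ell :: nat
  assumes params: "0 \<le> eps" "0 \<le> c0" "ereal c0 \<le> C0" "0 < cs" "0 < c1"
    and tau0: "0 < \<tau> 0"
    and S_sym_psd: "\<And>k. enat k \<le> K \<Longrightarrow> sym_psd (S k)"
    and S_bdd: "\<And>k. enat k \<le> K \<Longrightarrow> norm (S k) \<le> MS"
    and dir: "\<And>k. enat k \<le> K \<Longrightarrow> slbfgs_B cs ell gJ x \<tau> S k (d k) = - gJ (x k)"
    and update: "\<And>k. enat k \<le> K \<Longrightarrow> x (Suc k) = x k + \<alpha> k *\<^sub>R d k"
    and not_stopped: "\<And>k. enat k < K \<Longrightarrow> eps < norm (gJ (x (Suc k)))"
    and tau_choice: "\<And>k. enat k < K \<Longrightarrow>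
          tau_admissible c0 C0 c1 c2 (norm (gJ (x (Suc k)))) (step_s x k)
            (step_y gJ x k - blinfun_apply (S (Suc k)) (step_s x k)) (\<tau> (Suc k))"
    and lip: "0 < L" "\<And>u v. J u \<le> J (x 0) \<Longrightarrow> J v \<le> J (x 0) \<Longrightarrow>
                 norm (gJ u - gJ v) \<le> L * norm (u - v)"
    and armijo_steps: "0 < \<sigma>" "\<And>k. enat k \<le> K \<Longrightarrow> 0 < \<alpha> k \<and> armijo J gJ \<sigma> (x k) (d k) (\<alpha> k)"
    and B0_inverse: "0 < MB"
      "\<And>k v. c0 = 0 \<Longrightarrow> enat k \<le> K \<Longrightarrow> norm v \<le> MB * norm (slbfgs_B0 \<tau> S k v)"
begin

lemma MS_nonneg: "0 \<le> MS"
proof -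
  have "norm (S 0) \<le> MS" using S_bdd[of 0] by (simp add: zero_enat_def[symmetric])
  then show ?thesis by (meson norm_ge_zero order_trans)
qed

lemma grad_Suc_pos: "enat j < K \<Longrightarrow> 0 < norm (gJ (x (Suc j)))"
  using not_stopped[of j] params(1) by linarith

lemma step_y_le: "J (x j) \<le> J (x 0) \<Longrightarrow> J (x (Suc j)) \<le> J (x 0) \<Longrightarrow>
    norm (step_y gJ x j) \<le> L * norm (step_s x j)"
  unfolding step_y_def step_s_def by (rule lip(2))

abbreviation z_step :: "nat \<Rightarrow> 'a" where
  "z_step j \<equiv> step_y gJ x j - blinfun_apply (S (Suc j)) (step_s x j)"

lemma norm_z_step_le:
  assumes "enat j < K" "J (x j) \<le> J (x 0)" "J (x (Suc j)) \<le> J (x 0)"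
  shows "norm (z_step j) \<le> (L + MS) * norm (step_s x j)"
proof -
  have "norm (S (Suc j)) \<le> MS" using S_bdd assms(1) by (simp add: Suc_ile_eq)
  then have "norm (blinfun_apply (S (Suc j)) (step_s x j)) \<le> MS * norm (step_s x j)"
    using norm_blinfun[of "S (Suc j)" "step_s x j"] mult_right_mono[of _ MS "norm (step_s x j)"]
    by (meson norm_ge_zero order_trans)
  then show ?thesis
    using norm_triangle_ineq4[of "step_y gJ x j" "blinfun_apply (S (Suc j)) (step_s x j)"]
      step_y_le[OF assms(2,3)] by (simp add: distrib_right)
qed

lemma tau_ge_omega_l: "enat j < K \<Longrightarrow> omega_l c0 c1 c2 (norm (gJ (x (Suc j)))) \<le> \<tau> (Suc j)"
  using tau_admissible_ge_omega_l[OF params(3) tau_choice] .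

lemma tau_nonneg: "0 \<le> \<tau> k" if "enat k \<le> K"
proof (cases k)
  case 0
  then show ?thesis using tau0 by simp
next
  case (Suc j)
  then have "enat j < K" using that by (simp add: Suc_ile_eq)
  then show ?thesis
    using Suc tau_ge_omega_l[of j] omega_l_nonneg[OF params(2), of c1 c2 "norm (gJ (x (Suc j)))"] params(5)
    by simp
qed

lemma tau_g_bounded_infinite:
  assumes "C0 = \<infinity>" "enat j < K" "J (x j) \<le> J (x 0)" "J (x (Suc j)) \<le> J (x 0)"
  shows "tau_g c0 C0 c1 c2 (norm (gJ (x (Suc j)))) (step_s x j) (z_step j) \<le> max (L + MS) c0"
  by (rule tau_g_le_infinite[OF assms(1) norm_z_step_le[OF assms(2-4)]]) (use lip MS_nonneg in simp)

lemma tau_bounded_hessian: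
  assumes C0: "C0 = \<infinity>" and der: "\<And>z. (gJ has_derivative blinfun_apply (H z)) (at z)"
    and cont: "continuous_on UNIV H"
    and psd: "sym_psd (integral {0..1} (\<lambda>t. H (x j + t *\<^sub>R step_s x j)) - S (Suc j))"
    and bdd: "norm (integral {0..1} (\<lambda>t. H (x j + t *\<^sub>R step_s x j)) - S (Suc j)) \<le> MG"
    and j: "enat j < K" "J (x j) \<le> J (x 0)" "J (x (Suc j)) \<le> J (x 0)"
  shows "\<tau> (Suc j) \<le> max (L + MS) c0 + max MG c0"
proof (cases "0 < z_step j \<bullet> step_s x j")
  case True
  \<comment> \<open>mean value theorem: the averaged Hessian maps the step s to the gradient difference y\<close>
  have "blinfun_apply (integral {0..1} (\<lambda>t. H (x j + t *\<^sub>R step_s x j)) - S (Suc j)) (step_s x j) = z_step j"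
    using integral_derivative_segment_apply[of gJ H, OF der cont]
    unfolding step_y_def step_s_def by (simp add: blinfun.diff_left)
  then have "tau_z c0 C0 c1 c2 (norm (gJ (x (Suc j)))) (step_s x j) (z_step j) \<le> max MG c0"
    by (rule tau_z_le_infinite[OF C0 psd bdd _ True])
  moreover have "\<tau> (Suc j) \<le> tau_z c0 C0 c1 c2 (norm (gJ (x (Suc j)))) (step_s x j) (z_step j)"
    using tau_choice[OF j(1)] True unfolding tau_admissible_def by simp
  ultimately show ?thesis using params(2) by linarith
next
  case False
  then have "\<tau> (Suc j) \<le> tau_g c0 C0 c1 c2 (norm (gJ (x (Suc j)))) (step_s x j) (z_step j)"
    using tau_choice[OF j(1)] unfolding tau_admissible_def by simp
  then show ?thesis using tau_g_bounded_infinite[OF C0 j] params(2) by linarith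
qed

lemma tau_bounded_infinite:
  assumes C0: "C0 = \<infinity>"
    and "(\<forall>k. enat k < K \<longrightarrow>
              \<tau> (Suc k) \<le> tau_g c0 C0 c1 c2 (norm (gJ (x (Suc k)))) (step_s x k) (z_step k))
        \<or> (\<exists>H :: 'a \<Rightarrow> ('a \<Rightarrow>\<^sub>L 'a).
              (\<forall>z. (gJ has_derivative blinfun_apply (H z)) (at z)) \<and> continuous_on UNIV H \<and>
              (\<forall>k. enat k < K \<longrightarrow>
                 sym_psd (integral {0..1} (\<lambda>t. H (x k + t *\<^sub>R step_s x k)) - S (Suc k))) \<and>
              (\<exists>M. \<forall>k. enat k < K \<longrightarrow>
                 norm (integral {0..1} (\<lambda>t. H (x k + t *\<^sub>R step_s x k)) - S (Suc k)) \<le> M))"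
  obtains M where "\<And>j. enat j < K \<Longrightarrow> J (x j) \<le> J (x 0) \<Longrightarrow> J (x (Suc j)) \<le> J (x 0) \<Longrightarrow>
    \<tau> (Suc j) \<le> M"
  using assms(2)
proof (elim disjE exE conjE)
  assume "\<forall>k. enat k < K \<longrightarrow>
    \<tau> (Suc k) \<le> tau_g c0 C0 c1 c2 (norm (gJ (x (Suc k)))) (step_s x k) (z_step k)"
  then show ?thesis
    using that[of "max (L + MS) c0"] tau_g_bounded_infinite[OF C0] by (meson order_trans)
next
  fix H :: "'a \<Rightarrow> ('a \<Rightarrow>\<^sub>L 'a)" and MG
  assume "\<forall>z. (gJ has_derivative blinfun_apply (H z)) (at z)" "continuous_on UNIV H"
    "\<forall>k. enat k < K \<longrightarrow> sym_psd (integral {0..1} (\<lambda>t. H (x k + t *\<^sub>R step_s x k)) - S (Suc k))"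
    "\<forall>k. enat k < K \<longrightarrow> norm (integral {0..1} (\<lambda>t. H (x k + t *\<^sub>R step_s x k)) - S (Suc k)) \<le> MG"
  then show ?thesis
    using that[of "max (L + MS) c0 + max MG c0"] tau_bounded_hessian[OF C0] by blast
qed

lemma tau_upper_bound:
  assumes C0_inf: "C0 = \<infinity> \<Longrightarrow>
          (\<forall>k. enat k < K \<longrightarrow>
              \<tau> (Suc k) \<le> tau_g c0 C0 c1 c2 (norm (gJ (x (Suc k)))) (step_s x k) (z_step k))
        \<or> (\<exists>H :: 'a \<Rightarrow> ('a \<Rightarrow>\<^sub>L 'a).
              (\<forall>z. (gJ has_derivative blinfun_apply (H z)) (at z)) \<and> continuous_on UNIV H \<and>
              (\<forall>k. enat k < K \<longrightarrow>
                 sym_psd (integral {0..1} (\<lambda>t. H (x k + t *\<^sub>R step_s x k)) - S (Suc k))) \<and>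
              (\<exists>M. \<forall>k. enat k < K \<longrightarrow>
                 norm (integral {0..1} (\<lambda>t. H (x k + t *\<^sub>R step_s x k)) - S (Suc k)) \<le> M))"
  obtains T where "0 < T" "\<tau> 0 \<le> T"
    "\<And>j. enat j < K \<Longrightarrow> J (x j) \<le> J (x 0) \<Longrightarrow> J (x (Suc j)) \<le> J (x 0) \<Longrightarrow>
       \<tau> (Suc j) \<le> T * max 1 (norm (gJ (x (Suc j))) powr - c2)"
proof (cases C0)
  case (real C)
  then have C: "0 \<le> C" using params(2,3) by simp
  define T where "T = C + 1 / c1 + \<tau> 0"
  show ?thesis
  proof (rule that)
    have "0 < 1 / c1" using params(5) by simp
    then show "0 < T" "\<tau> 0 \<le> T" unfolding T_def using C tau0 by linarith+
    fix j assume "enat j < K"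
    then have "\<tau> (Suc j) \<le> (C + 1 / c1) * max 1 (norm (gJ (x (Suc j))) powr - c2)"
      using tau_admissible_le_finite[OF real C params(5) grad_Suc_pos tau_choice] by simp
    also have "\<dots> \<le> T * max 1 (norm (gJ (x (Suc j))) powr - c2)"
      unfolding T_def using tau0 by (intro mult_right_mono) auto
    finally show "\<tau> (Suc j) \<le> T * max 1 (norm (gJ (x (Suc j))) powr - c2)" .
  qed
next
  case PInf
  obtain M where M: "\<And>j. enat j < K \<Longrightarrow> J (x j) \<le> J (x 0) \<Longrightarrow> J (x (Suc j)) \<le> J (x 0) \<Longrightarrow>
    \<tau> (Suc j) \<le> M" using tau_bounded_infinite[OF PInf C0_inf[OF PInf]] by blast
  define T where "T = max M 0 + \<tau> 0"
  show ?thesis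
  proof (rule that)
    show "0 < T" "\<tau> 0 \<le> T" unfolding T_def using tau0 by simp_all
    fix j assume "enat j < K" "J (x j) \<le> J (x 0)" "J (x (Suc j)) \<le> J (x 0)"
    then have "\<tau> (Suc j) \<le> M" by (rule M)
    then have "\<tau> (Suc j) \<le> T" unfolding T_def using tau0 by linarith
    also have "\<dots> \<le> T * max 1 (norm (gJ (x (Suc j))) powr - c2)"
      using \<open>0 < T\<close> by (simp add: mult_le_cancel_left1)
    finally show "\<tau> (Suc j) \<le> T * max 1 (norm (gJ (x (Suc j))) powr - c2)" .
  qed
next
  case MInf
  then show ?thesis using params(3) by simp
qed

end

locale slbfgs_run_bounded_tau = slbfgs_run +
  fixes T :: real
  assumes T_pos: "0 < T" and tau0_le_T: "\<tau> 0 \<le> T"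
    and tau_le_T: "\<And>j. enat j < K \<Longrightarrow> J (x j) \<le> J (x 0) \<Longrightarrow> J (x (Suc j)) \<le> J (x 0) \<Longrightarrow>
       \<tau> (Suc j) \<le> T * max 1 (norm (gJ (x (Suc j))) powr - c2)"
begin

definition seed_lower :: real where
  "seed_lower = min (\<tau> 0) (if c0 = 0 then 1 / (MB\<^sup>2 * (T + MS)) else min c0 c1)"

definition B_lower :: real where
  "B_lower = lbfgs_kappa cs L ^ ell * min seed_lower (cs / 4)"

definition B_upper :: real where
  "B_upper = 2 ^ ell * (T + MS + L\<^sup>2 / cs)"

lemma seed_lower_pos: "0 < seed_lower"
  unfolding seed_lower_def using tau0 T_pos MS_nonneg B0_inverse(1) params(2,5) by auto

lemma B_lower_pos: "0 < B_lower"
  unfolding B_lower_def using seed_lower_pos lbfgs_kappa_pos_le_one[of cs L] params(4) lip(1) by simp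

lemma tau_bounded:
  assumes "enat k \<le> K" "\<forall>i\<le>k. J (x i) \<le> J (x 0)"
  shows "\<tau> k \<le> T * max 1 (norm (gJ (x k)) powr - c2)"
proof (cases k)
  case 0
  have "T \<le> T * max 1 (norm (gJ (x 0)) powr - c2)" using T_pos by (simp add: mult_le_cancel_left1)
  then show ?thesis using tau0_le_T 0 by simp
next
  case (Suc j)
  then show ?thesis using tau_le_T[of j] assms by (simp add: Suc_ile_eq)
qed

lemma tau_plus_MS_bounded:
  assumes "enat k \<le> K" "\<forall>i\<le>k. J (x i) \<le> J (x 0)"
  shows "\<tau> k + MS \<le> (T + MS) * max 1 (norm (gJ (x k)) powr - c2)"
proof -
  have "MS \<le> MS * max 1 (norm (gJ (x k)) powr - c2)"
    using MS_nonneg by (simp add: mult_le_cancel_left1)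
  then show ?thesis using tau_bounded[OF assms] by (simp add: distrib_right)
qed

lemma seed_lower_condition:
  assumes k: "enat k \<le> K" and level: "\<forall>i\<le>k. J (x i) \<le> J (x 0)" and g: "gJ (x k) \<noteq> 0"
  defines "m \<equiv> min 1 (norm (gJ (x k)) powr c2)"
  shows "seed_lower * m \<le> \<tau> k \<or>
    (\<forall>v. norm v \<le> MB * norm (slbfgs_B0 \<tau> S k v)) \<and> seed_lower * m * MB\<^sup>2 * (\<tau> k + MS) \<le> 1"
proof -
  define X where "X = max 1 (norm (gJ (x k)) powr - c2)"
  have mX: "m * X = 1" unfolding m_def X_def using g by (simp add: min_one_powr_mult_max_one_powr)
  have m: "0 < m" "m \<le> 1" unfolding m_def using g by auto
  show ?thesis
  proof (cases "k = 0")
    case True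
    have "seed_lower * m \<le> seed_lower" using seed_lower_pos m by (simp add: mult_left_le)
    moreover have "seed_lower \<le> \<tau> 0" unfolding seed_lower_def by simp
    ultimately show ?thesis using True by simp
  next
    case False
    then obtain j where j: "k = Suc j" "enat j < K" using k by (metis Suc_ile_eq not0_implies_Suc)
    show ?thesis
    proof (cases "c0 = 0")
      case True
      have Q: "0 < T + MS" "0 < MB\<^sup>2" using T_pos MS_nonneg B0_inverse(1) by auto
      have "seed_lower \<le> 1 / (MB\<^sup>2 * (T + MS))" unfolding seed_lower_def using True by simp
      then have sP: "seed_lower * (MB\<^sup>2 * (T + MS)) \<le> 1" using Q by (simp add: pos_le_divide_eq)
      have "seed_lower * m * MB\<^sup>2 * (\<tau> k + MS) \<le> seed_lower * m * MB\<^sup>2 * ((T + MS) * X)"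
        using tau_plus_MS_bounded[OF k level] seed_lower_pos m Q unfolding X_def
        by (intro mult_left_mono) auto
      also have "\<dots> = seed_lower * (MB\<^sup>2 * (T + MS)) * (m * X)" by (simp add: mult_ac)
      also have "\<dots> \<le> 1" using sP mX by simp
      finally show ?thesis using B0_inverse(2)[OF True k] by blast
    next
      case False
      have "seed_lower \<le> min c0 c1" unfolding seed_lower_def using False by (simp add: min_le_iff_disj)
      then have "seed_lower * m \<le> min c0 c1 * m" using m by (simp add: mult_right_mono)
      also have "\<dots> \<le> omega_l c0 c1 c2 (norm (gJ (x k)))"
        unfolding m_def by (rule omega_l_ge) (use params in auto)
      also have "\<dots> \<le> \<tau> k" using tau_ge_omega_l[OF j(2)] j(1) by simp
      finally show ?thesis ..
    qed
  qed
qed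

lemma seed_spd_bounds:
  assumes k: "enat k \<le> K" and level: "\<forall>i\<le>k. J (x i) \<le> J (x 0)" and g: "gJ (x k) \<noteq> 0"
  shows "spd_bounds (slbfgs_B0 \<tau> S k) (seed_lower * min 1 (norm (gJ (x k)) powr c2))
           ((T + MS) * max 1 (norm (gJ (x k)) powr - c2))"
proof -
  have "0 < seed_lower * min 1 (norm (gJ (x k)) powr c2)" using seed_lower_pos g by simp
  with spd_bounds_slbfgs_B0[where \<tau>=\<tau> and S=S and k=k, OF S_sym_psd[OF k] S_bdd[OF k] tau_nonneg[OF k]]
    seed_lower_condition[OF k level g]
  have "spd_bounds (slbfgs_B0 \<tau> S k) (seed_lower * min 1 (norm (gJ (x k)) powr c2)) (\<tau> k + MS)"
    by blast
  then show ?thesis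
    using \<open>0 < seed_lower * _\<close> by (rule spd_bounds_mono[OF _ _ order_refl tau_plus_MS_bounded[OF k level]])
qed

lemma B_spd_bounds:
  assumes k: "enat k \<le> K" and level: "\<forall>i\<le>k. J (x i) \<le> J (x 0)" and g: "gJ (x k) \<noteq> 0"
  shows "spd_bounds (slbfgs_B cs ell gJ x \<tau> S k) (B_lower * min 1 (norm (gJ (x k)) powr c2))
           (B_upper * max 1 (norm (gJ (x k)) powr - c2))"
proof -
  define m where "m = min 1 (norm (gJ (x k)) powr c2)"
  define X where "X = max 1 (norm (gJ (x k)) powr - c2)"
  have m: "0 < m" "m \<le> 1" and X: "1 \<le> X" unfolding m_def X_def using g by auto
  have pairs: "\<forall>j\<in>set (stored_pairs cs ell (step_s x) (step_y gJ x) k).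
      cs * (norm (step_s x j))\<^sup>2 < step_y gJ x j \<bullet> step_s x j \<and> norm (step_y gJ x j) \<le> L * norm (step_s x j)"
    using step_y_le level by (simp add: set_stored_pairs)
  from lbfgs_updates_spd_bounds[OF seed_spd_bounds[OF k level g] params(4) less_imp_le[OF lip(1)]
      pairs length_stored_pairs_le]
  have "spd_bounds (slbfgs_B cs ell gJ x \<tau> S k)
      (lbfgs_kappa cs L ^ ell * min (seed_lower * m) (cs / 4)) (2 ^ ell * ((T + MS) * X + L\<^sup>2 / cs))"
    unfolding slbfgs_B_def m_def X_def .
  moreover have "B_lower * m \<le> lbfgs_kappa cs L ^ ell * min (seed_lower * m) (cs / 4)"
    unfolding B_lower_def using lbfgs_kappa_pos_le_one[OF params(4) less_imp_le[OF lip(1)]]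
      min_mult_le_min[OF m(2), of seed_lower "cs / 4"] m seed_lower_pos params(4)
    by (simp add: mult.assoc mult_left_mono)
  moreover have "2 ^ ell * ((T + MS) * X + L\<^sup>2 / cs) \<le> B_upper * X"
  proof -
    have "0 \<le> L\<^sup>2 / cs" using params(4) by simp
    from mult_right_mono[OF X this] have "L\<^sup>2 / cs \<le> L\<^sup>2 / cs * X" by (simp add: mult.commute)
    then have "(T + MS) * X + L\<^sup>2 / cs \<le> (T + MS + L\<^sup>2 / cs) * X" by (simp add: distrib_right)
    then show ?thesis unfolding B_upper_def by (simp add: mult.assoc)
  qed
  moreover have "0 < B_lower * m" using B_lower_pos m by simp
  ultimately show ?thesis unfolding m_def X_def using spd_bounds_mono by blast
qed

lemma descent:
  assumes k: "enat k \<le> K" and level: "\<forall>i\<le>k. J (x i) \<le> J (x 0)"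
  shows "J (x (Suc k)) \<le> J (x k)"
proof -
  have "gJ (x k) \<bullet> d k \<le> 0"
  proof (cases "gJ (x k) = 0")
    case False
    from spd_bounds_psd[OF B_spd_bounds[OF k level False], of "d k"]
    show ?thesis using dir[OF k] by (simp add: inner_commute)
  qed simp
  moreover have "0 < \<alpha> k" "armijo J gJ \<sigma> (x k) (d k) (\<alpha> k)" using armijo_steps(2)[OF k] by auto
  ultimately show ?thesis
    using armijo_no_increase[of J gJ \<sigma> "x k" "d k" "\<alpha> k"] armijo_steps(1) update[OF k] by simp
qed

lemma iterates_in_level_set: "enat k \<le> K \<Longrightarrow> \<forall>i\<le>k. J (x i) \<le> J (x 0)"
proof (induction k)
  case (Suc k)
  then have "enat k \<le> K" using Suc_ile_eq less_imp_le by blast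
  with Suc.IH have level: "\<forall>i\<le>k. J (x i) \<le> J (x 0)" by blast
  then have "J (x (Suc k)) \<le> J (x 0)" using descent[OF \<open>enat k \<le> K\<close>] by force
  with level show ?case by (auto simp: le_Suc_eq)
qed simp

lemma direction_estimates_at:
  assumes k: "enat k \<le> K"
  defines "C \<equiv> max 1 B_upper"
  shows "1 / C * min 1 (norm (gJ (x k)) powr c2) \<le> norm (d k) / norm (gJ (x k)) \<and>
    norm (d k) / norm (gJ (x k)) \<le> C / B_lower * max 1 (norm (gJ (x k)) powr - c2) \<and>
    inverse (C / B_lower) * norm (gJ (x k)) * min 1 (norm (gJ (x k)) powr (2 * c2))
      \<le> \<bar>gJ (x k) \<bullet> d k\<bar> / norm (d k)"
proof (cases "gJ (x k) = 0")
  case False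
  have "B_upper * max 1 (norm (gJ (x k)) powr - c2) \<le> C * max 1 (norm (gJ (x k)) powr - c2)"
    unfolding C_def by (intro mult_right_mono) auto
  with spd_bounds_direction_estimates[OF B_spd_bounds[OF k iterates_in_level_set[OF k] False]
      dir[OF k] False B_lower_pos, of C]
  show ?thesis unfolding C_def by auto
qed (use B_lower_pos in \<open>simp add: C_def\<close>)

lemma direction_estimates:
  "\<exists>c C. 0 < c \<and> 0 < C \<and> (\<forall>k. enat k \<le> K \<longrightarrow>
           c * min 1 (norm (gJ (x k)) powr c2) \<le> norm (d k) / norm (gJ (x k)) \<and>
           norm (d k) / norm (gJ (x k)) \<le> C * max 1 (norm (gJ (x k)) powr (- c2)) \<and>
           inverse C * norm (gJ (x k)) * min 1 (norm (gJ (x k)) powr (2 * c2))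
             \<le> \<bar>gJ (x k) \<bullet> d k\<bar> / norm (d k))"
  using direction_estimates_at B_lower_pos
  by (intro exI[of _ "1 / max 1 B_upper"] exI[of _ "max 1 B_upper / B_lower"]) auto

end

theorem corollary4p7:
  fixes J :: "'a::{real_inner, complete_space} \<Rightarrow> real"
    and gJ :: "'a \<Rightarrow> 'a"
    and x d :: "nat \<Rightarrow> 'a"
    and \<alpha> \<tau> :: "nat \<Rightarrow> real"
    and S :: "nat \<Rightarrow> 'a \<Rightarrow>\<^sub>L 'a"
    and K :: enat
    and eps c0 cs c1 c2 L :: real
    and C0 :: ereal
    and ell :: nat
  assumes params: "0 \<le> eps" "0 \<le> c0" "ereal c0 \<le> C0" "0 < cs" "0 < c1" "0 < c2"
    and tau0: "0 < \<tau> 0"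
    and S_sym_psd: "\<And>k. enat k \<le> K \<Longrightarrow> sym_psd (S k)"
    and dir: "\<And>k. enat k \<le> K \<Longrightarrow> slbfgs_B cs ell gJ x \<tau> S k (d k) = - gJ (x k)"
    and update: "\<And>k. enat k \<le> K \<Longrightarrow> x (Suc k) = x k + \<alpha> k *\<^sub>R d k"
    and not_stopped: "\<And>k. enat k < K \<Longrightarrow> eps < norm (gJ (x (Suc k)))"
    and stopped: "\<And>k. enat k = K \<Longrightarrow> norm (gJ (x (Suc k))) \<le> eps"
    and tau_choice: "\<And>k. enat k < K \<Longrightarrow>
          tau_admissible c0 C0 c1 c2 (norm (gJ (x (Suc k)))) (step_s x k)
            (step_y gJ x k - blinfun_apply (S (Suc k)) (step_s x k)) (\<tau> (Suc k))"
    \<comment> \<open>Assumption 1\<close>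
    and grad: "\<And>z. GDERIV J z :> gJ z"
    and grad_cont: "continuous_on UNIV gJ"
    and bdd: "bdd_below (range J)"
    \<comment> \<open>Assumption 2\<close>
    and lip: "0 < L" "\<And>u v. J u \<le> J (x 0) \<Longrightarrow> J v \<le> J (x 0) \<Longrightarrow>
                 norm (gJ u - gJ v) \<le> L * norm (u - v)"
    \<comment> \<open>Assumption 3\<close>
    and S_bdd: "\<exists>M. \<forall>k. enat k \<le> K \<longrightarrow> norm (S k) \<le> M"
    \<comment> \<open>Assumption 4\<close>
    and linesearch:
      "(\<exists>\<beta> \<sigma>. 0 < \<beta> \<and> \<beta> < 1 \<and> 0 < \<sigma> \<and> \<sigma> < 1 \<and>
          (\<forall>k. enat k \<le> K \<longrightarrow>
             (\<exists>i::nat. \<alpha> k = \<beta> ^ i \<and> armijo J gJ \<sigma> (x k) (d k) (\<beta> ^ i) \<and>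
                (\<forall>i'<i. \<not> armijo J gJ \<sigma> (x k) (d k) (\<beta> ^ i')))) \<and>
          (\<exists>\<delta>>0. uniformly_continuous_on {z. \<exists>w. J w \<le> J (x 0) \<and> norm (z - w) < \<delta>} J \<or>
                  uniformly_continuous_on {z. \<exists>w. J w \<le> J (x 0) \<and> norm (z - w) < \<delta>} gJ))
       \<or> (\<exists>\<sigma> \<eta>. 0 < \<sigma> \<and> \<sigma> < \<eta> \<and> \<eta> < 1 \<and>
          (\<forall>k. enat k \<le> K \<longrightarrow> 0 < \<alpha> k \<and> armijo J gJ \<sigma> (x k) (d k) (\<alpha> k) \<and>
             \<eta> * (gJ (x k) \<bullet> d k) \<le> gJ (x k + \<alpha> k *\<^sub>R d k) \<bullet> d k))"
    \<comment> \<open>Assumption 5\<close>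
    and c0_zero: "c0 = 0 \<Longrightarrow> \<exists>M. \<forall>k. enat k \<le> K \<longrightarrow>
          surj (slbfgs_B0 \<tau> S k) \<and> (\<forall>v. norm v \<le> M * norm (slbfgs_B0 \<tau> S k v))"
    \<comment> \<open>Assumption 6\<close>
    and C0_inf: "C0 = \<infinity> \<Longrightarrow>
          (\<forall>k. enat k < K \<longrightarrow>
              \<tau> (Suc k) \<le> tau_g c0 C0 c1 c2 (norm (gJ (x (Suc k)))) (step_s x k)
                 (step_y gJ x k - blinfun_apply (S (Suc k)) (step_s x k)))
        \<or> (\<exists>H :: 'a \<Rightarrow> ('a \<Rightarrow>\<^sub>L 'a).
              (\<forall>z. (gJ has_derivative blinfun_apply (H z)) (at z)) \<and> continuous_on UNIV H \<and>
              (\<forall>k. enat k < K \<longrightarrow>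
                 sym_psd (integral {0..1} (\<lambda>t. H (x k + t *\<^sub>R step_s x k)) - S (Suc k))) \<and>
              (\<exists>M. \<forall>k. enat k < K \<longrightarrow>
                 norm (integral {0..1} (\<lambda>t. H (x k + t *\<^sub>R step_s x k)) - S (Suc k)) \<le> M))"
  shows "\<exists>c C. 0 < c \<and> 0 < C \<and> (\<forall>k. enat k \<le> K \<longrightarrow>
           c * min 1 (norm (gJ (x k)) powr c2) \<le> norm (d k) / norm (gJ (x k)) \<and>
           norm (d k) / norm (gJ (x k)) \<le> C * max 1 (norm (gJ (x k)) powr (- c2)) \<and>
           inverse C * norm (gJ (x k)) * min 1 (norm (gJ (x k)) powr (2 * c2))
             \<le> \<bar>gJ (x k) \<bullet> d k\<bar> / norm (d k))"
proof -
  obtain \<sigma> where \<sigma>: "0 < \<sigma>" "\<And>k. enat k \<le> K \<Longrightarrow> 0 < \<alpha> k \<and> armijo J gJ \<sigma> (x k) (d k) (\<alpha> k)"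
    using linesearch by (elim disjE exE conjE; metis zero_less_power)
  obtain MS where MS: "\<And>k. enat k \<le> K \<Longrightarrow> norm (S k) \<le> MS" using S_bdd by blast
  obtain MB where MB: "0 < MB"
    "\<And>k v. c0 = 0 \<Longrightarrow> enat k \<le> K \<Longrightarrow> norm v \<le> MB * norm (slbfgs_B0 \<tau> S k v)"
  proof (cases "c0 = 0")
    case True
    then obtain M where "\<forall>k. enat k \<le> K \<longrightarrow> (\<forall>v. norm v \<le> M * norm (slbfgs_B0 \<tau> S k v))"
      using c0_zero by blast
    then show ?thesis
      by (intro that[of "max M 1"]) (auto intro: order_trans[OF _ mult_right_mono[OF max.cobounded1]])
  qed (use that[of 1] in simp)
  interpret slbfgs_run J gJ x d \<alpha> \<tau> S K eps c0 cs c1 c2 L \<sigma> MS MB C0 ell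
    using params tau0 S_sym_psd MS dir update not_stopped tau_choice lip \<sigma> MB
    by unfold_locales blast+
  obtain T where "0 < T" "\<tau> 0 \<le> T"
    "\<And>j. enat j < K \<Longrightarrow> J (x j) \<le> J (x 0) \<Longrightarrow> J (x (Suc j)) \<le> J (x 0) \<Longrightarrow>
       \<tau> (Suc j) \<le> T * max 1 (norm (gJ (x (Suc j))) powr - c2)"
    using tau_upper_bound[OF C0_inf] by blast
  then interpret slbfgs_run_bounded_tau J gJ x d \<alpha> \<tau> S K eps c0 cs c1 c2 L \<sigma> MS MB C0 ell T
    by unfold_locales
  show ?thesis by (rule direction_estimates)
qed

end
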